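(* Let $G=(V,E)$ be a Bitcoin network, let $M\in\Gamma$ be a legitimate monitor, and let $G_M=(V,E_M)$ be the local snapshot of $M$. If $M$ executes the procedure $AToM(V)$ (so that, for each node $N\in V$, an iteration consisting of $PeeV(N)$ followed by $updateTopology(E_M,L_N^M)$ has been carried out), then for all $N,P\in V$, $$(N,P)\in E \iff (N,P)\in E_M.$$
   Context: A Bitcoin network is modeled as a directed graph $G=(V,E)$ whose vertices are the (reachable) nodes; $(N,P)\in E$ means $N$ has an outbound connection to $P$. For a node $X$, $O_X=\{Y:(X,Y)\in E\}$ (outbound peers) and $I_X=\{Y:(Y,X)\in E\}$ (inbound peers). $\Gamma$ is a set of legitimate monitors, each connected to every node (these connections are not in $E$). A marker is a triple $[N,M,r]$ (target, monitor, value). $PeeV(N)$, run by $M$: start with empty $L_N^M$; draw random $r$; send $[N,M,r]$ to $N$; until a timeout, whenever a marker equal to $[N,M,r]$ is received from a node $P$, add $P$ to $L_N^M$; then output $L_N^M$. $HandleMarker(pfrom,[N,M,r])$, run by a node $X$: if $pfrom=M\in\Gamma$, forward the marker to all outbound peers of $X$; if $pfrom=N$ and $N$ is an inbound peer of $X$, send the marker to $M$; otherwise do nothing. $AToM(V)$, run by $M$ with local snapshot $G_M=(V_M,E_M)$: for each node $N\in V$, while $N$ is online, repeat: $L_N^M\leftarrow PeeV(N)$; $updateTopology(E_M,L_N^M)$, which for every $P\in V$ adds $(N,P)$ to $E_M$ if $P\in L_N^M$ and removes $(N,P)$ from $E_M$ otherwise; send $N$ its list of verified peers; adjust the scan period and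 wait. Standing assumptions: all nodes are honest and execute $HandleMarker$; no connection is established or dropped during the execution; every message is delivered before the $PeeV$ timeout expires. *)

theory Defs
  imports Main
begin

text \<open>Nodes and monitors live in a common type 'n (a message sender pfrom may be either).
  A marker is a triple (target N, monitor M, value r).\<close>

type_synonym ('n, 'r) marker = "'n \<times> 'n \<times> 'r"

definition outbound :: "('n \<times> 'n) set \<Rightarrow> 'n \<Rightarrow> 'n set" where
  "outbound E X = {Y. (X, Y) \<in> E}"

definition inbound :: "('n \<times> 'n) set \<Rightarrow> 'n \<Rightarrow> 'n set" where
  "inbound E X = {Y. (Y, X) \<in> E}"

text \<open>HandleMarker(pfrom, [N,M,r]) run by node X: the set of recipients to which X
  sends the marker.\<close>
definition handle_marker ::
  "('n \<times> 'n) set \<Rightarrow> 'n set \<Rightarrow> 'n \<Rightarrow> 'n \<Rightarrow> ('n, 'r) marker \<Rightarrow> 'n set" where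
  "handle_marker E \<Gamma> X pfrom mk =
     (case mk of (N, M, r) \<Rightarrow>
        if pfrom = M \<and> M \<in> \<Gamma> then outbound E X
        else if pfrom = N \<and> N \<in> inbound E X then {M}
        else {})"

text \<open>Message deliveries caused by the monitor M sending marker [N,M,r] to N:
  delivered E \<Gamma> V mk s t  means that the marker mk is sent from s to t (and, by the
  standing assumption, delivered before the timeout). Every (honest) node X \<in> V runs
  HandleMarker on each marker it receives.\<close>
inductive delivered ::
  "('n \<times> 'n) set \<Rightarrow> 'n set \<Rightarrow> 'n set \<Rightarrow> ('n, 'r) marker \<Rightarrow> 'n \<Rightarrow> 'n \<Rightarrow> bool"
  for E \<Gamma> V mk where
  init: "mk = (N, M, r) \<Longrightarrow> delivered E \<Gamma> V mk M N"
| step: "delivered E \<Gamma> V mk s X \<Longrightarrow> X \<in> V \<Longrightarrow> Y \<in> handle_marker E \<Gamma> X s mk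
         \<Longrightarrow> delivered E \<Gamma> V mk X Y"

text \<open>PeeV(N) run by M with random value r: the list L_N^M of nodes from which M
  received the marker [N,M,r].\<close>
definition peev :: "('n \<times> 'n) set \<Rightarrow> 'n set \<Rightarrow> 'n set \<Rightarrow> 'n \<Rightarrow> 'n \<Rightarrow> 'r \<Rightarrow> 'n set" where
  "peev E \<Gamma> V N M r = {P. delivered E \<Gamma> V (N, M, r) P M}"

definition update_topology :: "'n set \<Rightarrow> 'n \<Rightarrow> 'n set \<Rightarrow> ('n \<times> 'n) set \<Rightarrow> ('n \<times> 'n) set" where
  "update_topology V N L EM =
     (EM - {(N, P) | P. P \<in> V}) \<union> {(N, P) | P. P \<in> V \<and> P \<in> L}"

definition atom_step ::
  "('n \<times> 'n) set \<Rightarrow> 'n set \<Rightarrow> 'n set \<Rightarrow> 'n \<Rightarrow> 'n \<times> 'r \<Rightarrow> ('n \<times> 'n) set \<Rightarrow> ('n \<times> 'n) set" where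
  "atom_step E \<Gamma> V M nr EM =
     (case nr of (N, r) \<Rightarrow> update_topology V N (peev E \<Gamma> V N M r) EM)"

text \<open>An execution of AToM(V) by M: a finite sequence of iterations (target, random value),
  applied in order to the initial snapshot EM0.\<close>
definition atom :: "('n \<times> 'n) set \<Rightarrow> 'n set \<Rightarrow> 'n set \<Rightarrow> 'n \<Rightarrow> ('n \<times> 'r) list
                    \<Rightarrow> ('n \<times> 'n) set \<Rightarrow> ('n \<times> 'n) set" where
  "atom E \<Gamma> V M runs EM0 = fold (atom_step E \<Gamma> V M) runs EM0"

end

theory Submission
  imports Defs
begin

text \<open>A marker [N,M,r] travels along at most two hops of the network: the monitor sends it to N,
  N forwards it to each outbound peer P, and P, seeing it arrive from its inbound peer N,
  returns it to M. Hence PeeV(N) reports exactly the outbound peers of N, and every iteration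
  of AToM for target N overwrites the row of N in the snapshot with the true row of E.\<close>

lemma delivered_marker_iff:
  assumes "E \<subseteq> V \<times> V" "N \<in> V" "M \<in> \<Gamma>" "M \<notin> V"
  shows "delivered E \<Gamma> V (N, M, r) s t \<longleftrightarrow>
    (s = M \<and> t = N) \<or> (s = N \<and> (N, t) \<in> E) \<or> (t = M \<and> (N, s) \<in> E)"
proof
  have "N \<noteq> M" using assms by auto
  show "delivered E \<Gamma> V (N, M, r) s t \<Longrightarrow>
    (s = M \<and> t = N) \<or> (s = N \<and> (N, t) \<in> E) \<or> (t = M \<and> (N, s) \<in> E)"
  proof (induction rule: delivered.induct)
    case init
    then show ?case by auto
  next
    case (step s X Y)
    from step.IH show ?case
    proof (elim disjE conjE)
      assume "s = M" "X = N"
      then show ?thesis using step.hyps(3) \<open>M \<in> \<Gamma>\<close>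
        by (auto simp: handle_marker_def outbound_def)
    next
      assume "s = N" "(N, X) \<in> E"
      then show ?thesis using step.hyps(3) \<open>N \<noteq> M\<close>
        by (auto simp: handle_marker_def inbound_def)
    next
      assume "X = M"
      then show ?thesis using step.hyps(2) \<open>M \<notin> V\<close> by simp
    qed
  qed
next
  have to_target: "delivered E \<Gamma> V (N, M, r) M N"
    by (rule delivered.init) simp
  have to_peer: "delivered E \<Gamma> V (N, M, r) N P" if "(N, P) \<in> E" for P
    using delivered.step[OF to_target \<open>N \<in> V\<close>] that \<open>M \<in> \<Gamma>\<close>
    by (simp add: handle_marker_def outbound_def)
  have to_monitor: "delivered E \<Gamma> V (N, M, r) P M" if "(N, P) \<in> E" for P
  proof (rule delivered.step[OF to_peer[OF that]])
    show "P \<in> V" using that \<open>E \<subseteq> V \<times> V\<close> by auto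
    show "M \<in> handle_marker E \<Gamma> P N (N, M, r)"
      using that assms by (auto simp: handle_marker_def inbound_def)
  qed
  show "(s = M \<and> t = N) \<or> (s = N \<and> (N, t) \<in> E) \<or> (t = M \<and> (N, s) \<in> E) \<Longrightarrow>
    delivered E \<Gamma> V (N, M, r) s t"
    using to_target to_peer to_monitor by blast
qed

lemma peev_eq_outbound:
  assumes "E \<subseteq> V \<times> V" "N \<in> V" "M \<in> \<Gamma>" "M \<notin> V"
  shows "peev E \<Gamma> V N M r = outbound E N"
proof -
  have "N \<noteq> M" "(N, M) \<notin> E" using assms by auto
  then show ?thesis
    by (auto simp: peev_def outbound_def delivered_marker_iff[OF assms])
qed

lemma atom_step_eq_update_outbound:
  assumes "E \<subseteq> V \<times> V" "N \<in> V" "M \<in> \<Gamma>" "M \<notin> V"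
  shows "atom_step E \<Gamma> V M (N, r) EM = update_topology V N (outbound E N) EM"
  by (simp add: atom_step_def peev_eq_outbound[OF assms])

lemma mem_atom_iff:
  assumes "E \<subseteq> V \<times> V" "fst ` set runs \<subseteq> V" "M \<in> \<Gamma>" "M \<notin> V" "P \<in> V"
  shows "(N, P) \<in> atom E \<Gamma> V M runs EM \<longleftrightarrow>
    (if N \<in> fst ` set runs then (N, P) \<in> E else (N, P) \<in> EM)"
  using assms(2)
proof (induction runs arbitrary: EM)
  case Nil
  then show ?case by (simp add: atom_def)
next
  case (Cons run runs)
  obtain N' r where run: "run = (N', r)" by fastforce
  have "N' \<in> V" using Cons.prems run by simp
  have "(N, P) \<in> atom_step E \<Gamma> V M run EM \<longleftrightarrow>
      (if N = N' then (N, P) \<in> E else (N, P) \<in> EM)"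
    unfolding run atom_step_eq_update_outbound[OF assms(1) \<open>N' \<in> V\<close> assms(3,4)]
    using \<open>P \<in> V\<close> by (auto simp: update_topology_def outbound_def)
  moreover have "atom E \<Gamma> V M (run # runs) EM = atom E \<Gamma> V M runs (atom_step E \<Gamma> V M run EM)"
    by (simp add: atom_def)
  ultimately show ?case
    using Cons.IH[of "atom_step E \<Gamma> V M run EM"] Cons.prems run by auto
qed

theorem theorem2:
  fixes E EM0 :: "('n \<times> 'n) set" and V \<Gamma> :: "'n set" and M :: 'n
    and runs :: "('n \<times> 'r) list"
  assumes "E \<subseteq> V \<times> V"
    and "V \<inter> \<Gamma> = {}"
    and "M \<in> \<Gamma>"
    and "EM0 \<subseteq> V \<times> V"
    and "set (map fst runs) = V"
    and "N \<in> V" and "P \<in> V"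
  shows "(N, P) \<in> E \<longleftrightarrow> (N, P) \<in> atom E \<Gamma> V M runs EM0"
proof -
  have targets: "fst ` set runs = V" using assms(5) by simp
  have "M \<notin> V" using assms(2,3) by blast
  show ?thesis
    using mem_atom_iff[OF assms(1) _ assms(3) \<open>M \<notin> V\<close> assms(7), of runs N EM0] targets assms(6)
    by simp
qed

end
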